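(* Let $G=(V,E)$ be an undirected graph without self-loops on $N$ vertices, with $V$ identified with $\{1,\ldots,N\}$, and let $\omega:E\to(0,\infty)$ be a weight function. Let $A=[a_{ij}]_{i,j=1}^N\in\mathbb{R}^{N\times N}$ be the real skew-symmetric matrix ($A^\top=-A$) with $a_{ij}\neq 0$ if and only if $\{i,j\}\in E$, and $a_{ij}=\sqrt{\omega(\{i,j\})}$ for $i<j$, $\{i,j\}\in E$. Let $x_{ij}$, $1\le i\le j\le N$, be $\binom{N+1}{2}$ independent real random variables with $\mathbb{E}\,x_{ij}=0$ and $\mathbb{E}\,x_{ij}^2=1$, and let $Y_A$ be the random skew-symmetric matrix $Y_A=[a_{ij}x_{\min(i,j)\max(i,j)}]_{i,j=1}^N$. Then for every $t\ge 0$: $$\mathbb{E}\det(\sqrt{t}I_N+Y_A)=\Phi(t,G_\omega)\ \text{ if } N \text{ is even},\qquad \mathbb{E}\det(\sqrt{t}I_N+Y_A)=\sqrt{t}\,\Phi(t,G_\omega)\ \text{ if } N \text{ is odd}.$$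
   Context: A $k$-matching of $G$ is a set of $k$ edges no two of which share a vertex. The weight of a matching $M$ is $\omega(M)=\prod_{e\in M}\omega(e)$. For $k\ge1$, $\phi(k,G_\omega)$ is the sum of $\omega(M)$ over all $k$-matchings $M$ of $G$ (zero if there are none), and $\phi(0,G_\omega)=1$. The weighted matching polynomial is $\Phi(t,G_\omega)=\sum_{k=0}^{n}\phi(k,G_\omega)t^{n-k}$ with $n=\lfloor N/2\rfloor$. $I_N$ is the $N\times N$ identity matrix. *)

theory Defs
  imports "HOL-Probability.Probability" "Jordan_Normal_Form.Determinant"
begin

text \<open>Vertices are 0..<N (order-preserving relabelling of 1..N); edges are
2-element sets of vertices; weights are given on edges.\<close>

definition matchings :: "nat set set \<Rightarrow> nat \<Rightarrow> nat set set set" where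
  "matchings E k = {M. M \<subseteq> E \<and> card M = k \<and>
      (\<forall>e\<in>M. \<forall>f\<in>M. e \<noteq> f \<longrightarrow> e \<inter> f = {})}"

definition phi_match :: "nat \<Rightarrow> nat set set \<Rightarrow> (nat set \<Rightarrow> real) \<Rightarrow> real" where
  "phi_match k E \<omega> = (if k = 0 then 1 else (\<Sum>M\<in>matchings E k. \<Prod>e\<in>M. \<omega> e))"

definition Phi_match :: "real \<Rightarrow> nat \<Rightarrow> nat set set \<Rightarrow> (nat set \<Rightarrow> real) \<Rightarrow> real" where
  "Phi_match t N E \<omega> = (\<Sum>k = 0..N div 2. phi_match k E \<omega> * t ^ (N div 2 - k))"

end

theory Submission
  imports Defs
begin

text \<open>Expand the determinant over permutations p of {0..<N}: a fixed point contributes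
  \<open>sqrt t\<close>, a moved point i contributes \<open>a i (p i)\<close> times the variable indexed by
  the unordered pair {i, p i}. By independence, a product of these variables has
  expectation 1 if every pair occurs exactly twice, i.e. if p is an involution, and 0
  if some pair occurs only once. An involution whose k transpositions form a matching M of
  G has sign \<open>(-1)^k\<close>, and each transposition {u, v} contributes
  \<open>a u v * a v u = - \<omega> {u, v}\<close>, so p contributes \<open>\<omega>(M) sqrt t ^ (N - 2 k)\<close>;
  an involution swapping a non-edge contributes 0. Involutions correspond bijectively to
  their sets of transpositions, which gives the matching polynomial.\<close>

definition moved :: "('a \<Rightarrow> 'a) \<Rightarrow> 'a set" where
  "moved p = {i. p i \<noteq> i}"

definition involutions :: "'a set \<Rightarrow> ('a \<Rightarrow> 'a) set" where
  "involutions S = {p. p permutes S \<and> (\<forall>i. p (p i) = i)}"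

definition perm_edges :: "('a \<Rightarrow> 'a) \<Rightarrow> 'a set set" where
  "perm_edges p = (\<lambda>i. {i, p i}) ` moved p"

lemma moved_subset: "p permutes S \<Longrightarrow> moved p \<subseteq> S"
  by (auto simp: moved_def permutes_def)

lemma finite_moved: "p permutes S \<Longrightarrow> finite S \<Longrightarrow> finite (moved p)"
  using moved_subset finite_subset by blast

lemma perm_edges_disjoint:
  assumes inv: "\<forall>i. p (p i) = i"
  shows "disjoint (perm_edges p)"
proof (rule disjointI)
  fix e f assume "e \<in> perm_edges p" "f \<in> perm_edges p" "e \<noteq> f"
  then obtain i j where "e = {i, p i}" "f = {j, p j}" "\<not> ({i, p i} = {j, p j})"
    by (auto simp: perm_edges_def)
  with inv show "e \<inter> f = {}" by (auto simp: doubleton_eq_iff)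
qed

lemma Union_perm_edges:
  assumes inv: "\<forall>i. p (p i) = i"
  shows "\<Union> (perm_edges p) = moved p"
proof
  show "\<Union> (perm_edges p) \<subseteq> moved p" using inv by (auto simp: perm_edges_def moved_def)
  show "moved p \<subseteq> \<Union> (perm_edges p)" by (auto simp: perm_edges_def)
qed

lemma card_moved_involution:
  assumes inv: "\<forall>i. p (p i) = i" and fin: "finite (moved p)"
  shows "card (moved p) = 2 * card (perm_edges p)"
proof -
  have "card (moved p) = sum card (perm_edges p)"
    using card_Union_disjoint[OF perm_edges_disjoint[OF inv]] Union_perm_edges[OF inv]
    by (auto simp: perm_edges_def)
  also have "\<dots> = sum (\<lambda>_. 2) (perm_edges p)"
    by (intro sum.cong) (auto simp: perm_edges_def moved_def)
  finally show ?thesis by simp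
qed

lemma prod_moved_involution:
  assumes inv: "\<forall>i. p (p i) = i" and fin: "finite (moved p)"
  shows "(\<Prod>i\<in>moved p. f i) = (\<Prod>e\<in>perm_edges p. \<Prod>i\<in>e. f i)"
  using prod.Union_disjoint[of "perm_edges p" f] perm_edges_disjoint[OF inv] Union_perm_edges[OF inv] fin
  by (auto simp: perm_edges_def disjoint_def)

lemma perm_edges_inj:
  assumes p: "\<forall>i. p (p i) = i" and q: "\<forall>i. q (q i) = i" and eq: "perm_edges p = perm_edges q"
  shows "p = q"
proof -
  have agree: "g i = f i" if g: "\<forall>i. g (g i) = i" and fg: "perm_edges f = perm_edges g"
    and i: "f i \<noteq> i" for f g :: "'a \<Rightarrow> 'a" and i
  proof -
    have "{i, f i} \<in> perm_edges g" using fg i by (auto simp: perm_edges_def moved_def)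
    then obtain j where "g j \<noteq> j" "{i, f i} = {j, g j}" by (auto simp: perm_edges_def moved_def)
    then show ?thesis using g by (metis doubleton_eq_iff)
  qed
  show ?thesis
  proof
    fix i show "p i = q i"
    proof (cases "p i = i")
      case True
      then show ?thesis using agree[of p q i] p eq by (cases "q i = i") auto
    next
      case False
      then show ?thesis using agree[of q p i] q eq by simp
    qed
  qed
qed

lemma involution_of_matching:
  assumes "finite S" "finite M" "disjoint M"
    and "\<forall>e\<in>M. \<exists>u\<in>S. \<exists>v\<in>S. u \<noteq> v \<and> e = {u, v}"
  shows "\<exists>p\<in>involutions S. perm_edges p = M \<and> sign p = (-1) ^ card M"
  using assms(2-)
proof (induction M rule: finite_induct)
  case empty
  have "id \<in> involutions S" by (simp add: involutions_def permutes_id)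
  then show ?case by (intro bexI[of _ id]) (auto simp: perm_edges_def moved_def sign_id)
next
  case (insert e M)
  have "disjoint M" using insert.prems(1) by (rule pairwise_subset) auto
  with insert.IH insert.prems(2) obtain p' where p': "p' permutes S" "\<forall>i. p' (p' i) = i"
    "perm_edges p' = M" "sign p' = (-1) ^ card M"
    by (auto simp: involutions_def)
  obtain u v where uv: "u \<in> S" "v \<in> S" "u \<noteq> v" "e = {u, v}" using insert.prems by auto
  have fixed: "p' w = w" if "w \<in> e" for w
  proof (rule ccontr)
    assume "p' w \<noteq> w"
    then have "{w, p' w} \<in> M" using p'(3) by (auto simp: perm_edges_def moved_def)
    then have "e \<inter> {w, p' w} = {}"
      using insert.hyps(2) by (intro disjointD[OF insert.prems(1)]) auto
    then show False using that by blast
  qed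
  then have fixed_uv: "p' u = u" "p' v = v" using uv(4) by auto
  have not_uv: "p' i \<noteq> u" "p' i \<noteq> v" if "i \<noteq> u" "i \<noteq> v" for i
    using that p'(2) fixed_uv by metis+
  define p where "p = Transposition.transpose u v \<circ> p'"
  have p_eq: "p i = (if i = u then v else if i = v then u else p' i)" for i
    using fixed_uv not_uv[of i] by (auto simp: p_def)
  have "p permutes S" unfolding p_def using p'(1) uv by (intro permutes_compose permutes_swap_id)
  moreover have "\<forall>i. p (p i) = i" using p'(2) not_uv by (auto simp: p_eq)
  ultimately have "p \<in> involutions S" by (simp add: involutions_def)
  moreover have "perm_edges p = insert e M"
  proof -
    have "moved p = insert u (insert v (moved p'))"
      using fixed_uv uv(3) by (auto simp: moved_def p_eq)
    moreover have "(\<lambda>i. {i, p i}) ` moved p' = M"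
      unfolding p'(3)[symmetric] perm_edges_def using fixed_uv
      by (intro image_cong) (auto simp: moved_def p_eq)
    moreover have "p u = v" "p v = u" using uv(3) by (simp_all add: p_eq)
    ultimately show ?thesis using uv(4) by (simp add: perm_edges_def insert_commute)
  qed
  moreover have "sign p = - sign p'"
    using p'(1) uv(3) \<open>finite S\<close> unfolding p_def
    by (simp add: sign_compose permutation_swap_id permutes_imp_permutation sign_swap_id)
  ultimately show ?case using p'(4) insert.hyps by auto
qed

lemma sign_involution:
  assumes p: "p \<in> involutions S" and S: "finite S"
  shows "sign p = (-1) ^ card (perm_edges p)"
proof -
  have perm: "p permutes S" and inv: "\<forall>i. p (p i) = i" using p by (auto simp: involutions_def)
  have "\<forall>e\<in>perm_edges p. \<exists>u\<in>S. \<exists>v\<in>S. u \<noteq> v \<and> e = {u, v}"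
    using permutes_in_image[OF perm] moved_subset[OF perm] by (auto simp: perm_edges_def moved_def)
  moreover have "finite (perm_edges p)" using finite_moved[OF perm S] by (simp add: perm_edges_def)
  ultimately obtain q where "q \<in> involutions S" "perm_edges q = perm_edges p"
    and "sign q = (-1) ^ card (perm_edges p)"
    using involution_of_matching[OF S _ perm_edges_disjoint[OF inv]] by blast
  moreover from this have "q = p" using perm_edges_inj inv by (auto simp: involutions_def)
  ultimately show ?thesis by simp
qed

lemma skew_diag_zero:
  fixes a :: "nat \<Rightarrow> nat \<Rightarrow> 'a :: linordered_ab_group_add"
  assumes "\<forall>i<N. \<forall>j<N. a j i = - a i j"
  shows "\<forall>i<N. a i i = 0"
proof (intro allI impI)
  fix i assume "i < N"
  then have "a i i = - a i i" using assms by blast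
  then show "a i i = 0" by simp
qed

lemma skew_sqrt_entry_product:
  fixes a :: "nat \<Rightarrow> nat \<Rightarrow> real"
  assumes weight_pos: "\<forall>e\<in>E. \<omega> e > 0"
    and skew: "\<forall>i<N. \<forall>j<N. a j i = - a i j"
    and entries: "\<forall>i<N. \<forall>j<N. i < j \<and> {i, j} \<in> E \<longrightarrow> a i j = sqrt (\<omega> {i, j})"
    and uv: "u < N" "v < N" "u \<noteq> v" "{u, v} \<in> E"
  shows "a u v * a v u = - \<omega> {u, v}"
proof -
  have ordered: "a i j * a j i = - \<omega> {i, j}" if "i < j" "j < N" "{i, j} \<in> E" for i j
  proof -
    have "a i j = sqrt (\<omega> {i, j})" using that entries by auto
    moreover have "a j i = - a i j" using that skew by (meson order.strict_trans)
    moreover have "\<omega> {i, j} > 0" using that weight_pos by blast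
    ultimately show ?thesis by simp
  qed
  show ?thesis
  proof (cases "u < v")
    case True
    then show ?thesis using ordered uv by blast
  next
    case False
    have "{v, u} = {u, v}" by (rule insert_commute)
    then have "a v u * a u v = - \<omega> {u, v}" using ordered[of v u] False uv by simp
    then show ?thesis by (simp only: mult.commute)
  qed
qed

lemma involution_weight:
  fixes a :: "nat \<Rightarrow> nat \<Rightarrow> real"
  assumes weight_pos: "\<forall>e\<in>E. \<omega> e > 0"
    and skew: "\<forall>i<N. \<forall>j<N. a j i = - a i j"
    and entries: "\<forall>i<N. \<forall>j<N. i < j \<and> {i, j} \<in> E \<longrightarrow> a i j = sqrt (\<omega> {i, j})"
    and p: "p \<in> involutions {0..<N}" and edges: "perm_edges p \<subseteq> E"
  shows "of_int (sign p) * (\<Prod>i\<in>moved p. a i (p i)) = (\<Prod>e\<in>perm_edges p. \<omega> e)"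
proof -
  have perm: "p permutes {0..<N}" and inv: "\<forall>i. p (p i) = i" using p by (auto simp: involutions_def)
  have fin: "finite (moved p)" using finite_moved[OF perm] by simp
  have edge: "(\<Prod>i\<in>e. a i (p i)) = - \<omega> e" if e: "e \<in> perm_edges p" for e
  proof -
    obtain i where i: "i \<in> moved p" "e = {i, p i}" using e by (auto simp: perm_edges_def)
    have "i < N" "p i < N" "i \<noteq> p i" "{i, p i} \<in> E"
      using i edges e moved_subset[OF perm] permutes_in_image[OF perm] by (auto simp: moved_def)
    then show ?thesis
      using skew_sqrt_entry_product[OF weight_pos skew entries] i(2) inv by simp
  qed
  have "(\<Prod>i\<in>moved p. a i (p i)) = (\<Prod>e\<in>perm_edges p. - \<omega> e)"
    unfolding prod_moved_involution[OF inv fin] using edge by (rule prod.cong[OF refl])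
  also have "\<dots> = (-1) ^ card (perm_edges p) * (\<Prod>e\<in>perm_edges p. \<omega> e)"
    by (rule prod_uminus)
  finally show ?thesis
    by (simp add: sign_involution[OF p] mult.assoc[symmetric] power_mult_distrib[symmetric])
qed

lemma involution_weight_zero:
  fixes a :: "nat \<Rightarrow> nat \<Rightarrow> real"
  assumes support: "\<forall>i<N. \<forall>j<N. (a i j \<noteq> 0 \<longleftrightarrow> {i, j} \<in> E)"
    and perm: "p permutes {0..<N}" and not_edges: "\<not> perm_edges p \<subseteq> E"
  shows "(\<Prod>i\<in>moved p. a i (p i)) = 0"
proof -
  obtain i where i: "i \<in> moved p" "{i, p i} \<notin> E" using not_edges by (auto simp: perm_edges_def)
  moreover have "i < N" "p i < N"
    using i(1) moved_subset[OF perm] permutes_in_image[OF perm] by auto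
  ultimately have "a i (p i) = 0" using support by blast
  then show ?thesis using i(1) finite_moved[OF perm] by (auto intro: prod_zero)
qed

lemma finite_graph_edges:
  fixes N :: nat
  assumes "E \<subseteq> {{i, j} | i j. i < N \<and> j < N \<and> i \<noteq> j}"
  shows "finite E"
  by (rule finite_subset[of _ "Pow {0..<N}"]) (use assms in auto)

lemma bij_betw_perm_edges_matchings:
  assumes graph: "E \<subseteq> {{i, j} | i j. i < N \<and> j < N \<and> i \<noteq> j}"
  shows "bij_betw perm_edges {p \<in> involutions {0..<N}. perm_edges p \<subseteq> E}
           (\<Union>k\<in>{0..N div 2}. matchings E k)"
proof (rule bij_betw_imageI)
  show "inj_on perm_edges {p \<in> involutions {0..<N}. perm_edges p \<subseteq> E}"
    by (auto simp: inj_on_def involutions_def intro: perm_edges_inj)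
  show "perm_edges ` {p \<in> involutions {0..<N}. perm_edges p \<subseteq> E} = (\<Union>k\<in>{0..N div 2}. matchings E k)"
  proof safe
    fix p assume p: "p \<in> involutions {0..<N}" "perm_edges p \<subseteq> E"
    then have perm: "p permutes {0..<N}" and inv: "\<forall>i. p (p i) = i" by (auto simp: involutions_def)
    have "2 * card (perm_edges p) = card (moved p)"
      using card_moved_involution[OF inv finite_moved[OF perm]] by simp
    also have "\<dots> \<le> N" using card_mono[OF _ moved_subset[OF perm]] by simp
    finally have "card (perm_edges p) \<in> {0..N div 2}" by simp
    moreover have "perm_edges p \<in> matchings E (card (perm_edges p))"
      using p(2) perm_edges_disjoint[OF inv] by (simp add: matchings_def disjoint_def)
    ultimately show "perm_edges p \<in> (\<Union>k\<in>{0..N div 2}. matchings E k)" by blast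
  next
    fix k M assume "M \<in> matchings E k"
    then have "M \<subseteq> E" and "disjoint M" by (auto simp: matchings_def disjoint_def)
    moreover from this have "finite M" using finite_graph_edges[OF graph] finite_subset by blast
    moreover have "\<exists>u\<in>{0..<N}. \<exists>v\<in>{0..<N}. u \<noteq> v \<and> e = {u, v}" if e: "e \<in> M" for e
    proof -
      obtain u v where "u < N" "v < N" "u \<noteq> v" "e = {u, v}" using e \<open>M \<subseteq> E\<close> graph by blast
      then show ?thesis by force
    qed
    ultimately obtain p where "p \<in> involutions {0..<N}" "perm_edges p = M"
      using involution_of_matching[of "{0..<N}" M] by auto
    with \<open>M \<subseteq> E\<close> show "M \<in> perm_edges ` {p \<in> involutions {0..<N}. perm_edges p \<subseteq> E}" by blast
  qed
qed

lemma finite_matchings: "finite E \<Longrightarrow> finite (matchings E k)"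
  by (rule finite_subset[of _ "Pow E"]) (auto simp: matchings_def)

lemma phi_match_eq_sum:
  assumes "finite E"
  shows "phi_match k E \<omega> = (\<Sum>M\<in>matchings E k. \<Prod>e\<in>M. \<omega> e)"
proof (cases "k = 0")
  case True
  have "M = {}" if "M \<in> matchings E 0" for M
    using that rev_finite_subset[OF assms] by (auto simp: matchings_def)
  then have "matchings E 0 = {{}}" by (auto simp: matchings_def)
  then show ?thesis using True by (simp add: phi_match_def)
qed (simp add: phi_match_def)

lemma sum_involutions_weight:
  fixes a :: "nat \<Rightarrow> nat \<Rightarrow> real" and c :: real
  assumes graph: "E \<subseteq> {{i, j} | i j. i < N \<and> j < N \<and> i \<noteq> j}"
    and weight_pos: "\<forall>e\<in>E. \<omega> e > 0"
    and skew: "\<forall>i<N. \<forall>j<N. a j i = - a i j"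
    and support: "\<forall>i<N. \<forall>j<N. (a i j \<noteq> 0 \<longleftrightarrow> {i, j} \<in> E)"
    and entries: "\<forall>i<N. \<forall>j<N. i < j \<and> {i, j} \<in> E \<longrightarrow> a i j = sqrt (\<omega> {i, j})"
  shows "(\<Sum>p\<in>involutions {0..<N}.
            of_int (sign p) * (\<Prod>i\<in>moved p. a i (p i)) * c ^ (N - card (moved p)))
       = (\<Sum>k = 0..N div 2. phi_match k E \<omega> * c ^ (N - 2 * k))"
    (is "sum ?w _ = _")
proof -
  let ?S = "{p \<in> involutions {0..<N}. perm_edges p \<subseteq> E}"
  let ?v = "\<lambda>M. (\<Prod>e\<in>M. \<omega> e) * c ^ (N - 2 * card M)"
  have finE: "finite E" using finite_graph_edges[OF graph] .
  have fin: "finite (involutions {0..<N})"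
    by (rule finite_subset[OF _ finite_permutations[of "{0..<N}"]]) (auto simp: involutions_def)
  have "sum ?w (involutions {0..<N}) = sum ?w ?S"
  proof (rule sum.mono_neutral_right[OF fin])
    show "\<forall>p\<in>involutions {0..<N} - ?S. ?w p = 0"
      using involution_weight_zero[OF support] by (auto simp: involutions_def)
  qed auto
  also have "\<dots> = (\<Sum>p\<in>?S. ?v (perm_edges p))"
  proof (rule sum.cong[OF refl])
    fix p assume p: "p \<in> ?S"
    then have perm: "p permutes {0..<N}" and inv: "\<forall>i. p (p i) = i" by (auto simp: involutions_def)
    have "card (moved p) = 2 * card (perm_edges p)"
      using card_moved_involution[OF inv finite_moved[OF perm]] by simp
    then show "?w p = ?v (perm_edges p)"
      using involution_weight[OF weight_pos skew entries] p by simp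
  qed
  also have "\<dots> = (\<Sum>M\<in>(\<Union>k\<in>{0..N div 2}. matchings E k). ?v M)"
    by (rule sum.reindex_bij_betw[OF bij_betw_perm_edges_matchings[OF graph]])
  also have "\<dots> = (\<Sum>k = 0..N div 2. \<Sum>M\<in>matchings E k. ?v M)"
    using finite_matchings[OF finE] by (intro sum.UNION_disjoint) (auto simp: matchings_def)
  also have "\<dots> = (\<Sum>k = 0..N div 2. phi_match k E \<omega> * c ^ (N - 2 * k))"
    by (intro sum.cong refl)
      (simp add: phi_match_eq_sum[OF finE] sum_distrib_right matchings_def)
  finally show ?thesis .
qed

lemma det_scalar_plus_hollow:
  fixes B :: "nat \<Rightarrow> nat \<Rightarrow> 'a :: comm_ring_1"
  assumes hollow: "\<forall>i<N. B i i = 0"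
  shows "Determinant.det (mat N N (\<lambda>(i, j). (if i = j then c else 0) + B i j))
       = (\<Sum>p | p permutes {0..<N}. of_int (sign p) * c ^ (N - card (moved p)) * (\<Prod>i\<in>moved p. B i (p i)))"
proof -
  let ?A = "mat N N (\<lambda>(i, j). (if i = j then c else 0) + B i j)"
  have "Determinant.det ?A = (\<Sum>p | p permutes {0..<N}. of_int (sign p) * (\<Prod>i = 0..<N. ?A $$ (i, p i)))"
    by (rule det_def') simp
  also have "\<dots> = (\<Sum>p | p permutes {0..<N}.
      of_int (sign p) * c ^ (N - card (moved p)) * (\<Prod>i\<in>moved p. B i (p i)))"
  proof (rule sum.cong[OF refl])
    fix p assume "p \<in> {p. p permutes {0..<N}}"
    then have p: "p permutes {0..<N}" by simp
    have moved: "moved p \<subseteq> {0..<N}" using moved_subset[OF p] .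
    have "(\<Prod>i = 0..<N. ?A $$ (i, p i))
        = (\<Prod>i\<in>{0..<N} - moved p. ?A $$ (i, p i)) * (\<Prod>i\<in>moved p. ?A $$ (i, p i))"
      by (rule prod.subset_diff[OF moved]) simp
    also have "(\<Prod>i\<in>{0..<N} - moved p. ?A $$ (i, p i)) = c ^ (N - card (moved p))"
      using hollow moved by (simp add: moved_def card_Diff_subset finite_subset)
    also have "(\<Prod>i\<in>moved p. ?A $$ (i, p i)) = (\<Prod>i\<in>moved p. B i (p i))"
      using moved permutes_in_image[OF p] by (intro prod.cong) (auto simp: moved_def)
    finally show "of_int (sign p) * (\<Prod>i = 0..<N. ?A $$ (i, p i))
      = of_int (sign p) * c ^ (N - card (moved p)) * (\<Prod>i\<in>moved p. B i (p i))"
      by (simp add: mult.assoc)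
  qed
  finally show ?thesis .
qed

lemma min_max_eq_iff_doubleton_eq:
  fixes a b c d :: "'a :: linorder"
  shows "(min a b, max a b) = (min c d, max c d) \<longleftrightarrow> {a, b} = {c, d}"
  by (cases "a \<le> b"; cases "c \<le> d") (auto simp: doubleton_eq_iff min_def max_def)

lemma moved_pair_fiber:
  fixes p :: "'a :: linorder \<Rightarrow> 'a"
  assumes i: "i \<in> moved p"
  shows "{j \<in> moved p. (min j (p j), max j (p j)) = (min i (p i), max i (p i))}
       = (if p (p i) = i then {i, p i} else {i})"
  using i unfolding min_max_eq_iff_doubleton_eq by (auto simp: doubleton_eq_iff moved_def)

lemma (in prob_space) expectation_prod_centered_powers:
  fixes Z :: "'i \<Rightarrow> 'a \<Rightarrow> real" and c :: "'i \<Rightarrow> nat"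
  assumes Q: "finite Q" and indep: "indep_vars (\<lambda>_. borel) Z Q"
    and c: "\<forall>q\<in>Q. c q = 1 \<or> c q = 2"
    and int1: "\<forall>q\<in>Q. integrable M (Z q)" and int2: "\<forall>q\<in>Q. integrable M (\<lambda>s. (Z q s)\<^sup>2)"
    and mean0: "\<forall>q\<in>Q. expectation (Z q) = 0"
    and var1: "\<forall>q\<in>Q. expectation (\<lambda>s. (Z q s)\<^sup>2) = 1"
  shows "integrable M (\<lambda>s. \<Prod>q\<in>Q. Z q s ^ c q)"
    and "expectation (\<lambda>s. \<Prod>q\<in>Q. Z q s ^ c q) = (if \<forall>q\<in>Q. c q = 2 then 1 else 0)"
proof -
  have indep_powers: "indep_vars (\<lambda>_. borel) (\<lambda>q s. Z q s ^ c q) Q"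
    using indep by (rule indep_vars_compose2) measurable
  have moment: "integrable M (\<lambda>s. Z q s ^ c q)"
    "expectation (\<lambda>s. Z q s ^ c q) = (if c q = 2 then 1 else 0)" if "q \<in> Q" for q
    using c int1 int2 mean0 var1 that by auto
  show "integrable M (\<lambda>s. \<Prod>q\<in>Q. Z q s ^ c q)"
    using indep_vars_integrable[OF Q indep_powers] moment by blast
  have "expectation (\<lambda>s. \<Prod>q\<in>Q. Z q s ^ c q) = (\<Prod>q\<in>Q. expectation (\<lambda>s. Z q s ^ c q))"
    using indep_vars_lebesgue_integral[OF Q indep_powers] moment by blast
  also have "\<dots> = (\<Prod>q\<in>Q. if c q = 2 then 1 else 0)"
    using moment by (intro prod.cong) auto
  also have "\<dots> = (if \<forall>q\<in>Q. c q = 2 then 1 else 0)"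
    using Q by (auto intro: prod_zero)
  finally show "expectation (\<lambda>s. \<Prod>q\<in>Q. Z q s ^ c q) = (if \<forall>q\<in>Q. c q = 2 then 1 else 0)" .
qed

lemma (in prob_space) expectation_prod_moved_entries:
  fixes X :: "nat \<Rightarrow> nat \<Rightarrow> 'a \<Rightarrow> real"
  assumes indep: "indep_vars (\<lambda>_. borel) (\<lambda>(i, j). X i j) {(i, j). i \<le> j \<and> j < N}"
    and int1: "\<forall>i j. i \<le> j \<and> j < N \<longrightarrow> integrable M (X i j)"
    and int2: "\<forall>i j. i \<le> j \<and> j < N \<longrightarrow> integrable M (\<lambda>s. (X i j s)\<^sup>2)"
    and mean0: "\<forall>i j. i \<le> j \<and> j < N \<longrightarrow> expectation (X i j) = 0"
    and var1: "\<forall>i j. i \<le> j \<and> j < N \<longrightarrow> expectation (\<lambda>s. (X i j s)\<^sup>2) = 1"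
    and p: "p permutes {0..<N}"
  shows "integrable M (\<lambda>s. \<Prod>i\<in>moved p. X (min i (p i)) (max i (p i)) s)"
    and "expectation (\<lambda>s. \<Prod>i\<in>moved p. X (min i (p i)) (max i (p i)) s)
         = (if \<forall>i. p (p i) = i then 1 else 0)"
proof -
  define e where "e i = (min i (p i), max i (p i))" for i
  define Q where "Q = e ` moved p"
  define c where "c q = card {i \<in> moved p. e i = q}" for q
  define Z where "Z = (\<lambda>(i, j). X i j)"
  have fin: "finite (moved p)" using finite_moved[OF p] by simp
  have c_e: "c (e i) = (if p (p i) = i then 2 else 1)" if "i \<in> moved p" for i
    using moved_pair_fiber[OF that] that by (simp add: c_def e_def moved_def)
  have Q_index: "Q \<subseteq> {(i, j). i \<le> j \<and> j < N}"
    using moved_subset[OF p] permutes_in_image[OF p] by (auto simp: Q_def e_def)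
  have prod_eq: "(\<Prod>i\<in>moved p. X (min i (p i)) (max i (p i)) s) = (\<Prod>q\<in>Q. Z q s ^ c q)" for s
  proof -
    have "(\<Prod>i\<in>moved p. X (min i (p i)) (max i (p i)) s) = (\<Prod>i\<in>moved p. Z (e i) s)"
      by (simp add: Z_def e_def)
    also have "\<dots> = (\<Prod>q\<in>Q. \<Prod>i\<in>{i \<in> moved p. e i = q}. Z (e i) s)"
      unfolding Q_def by (rule prod.image_gen[OF fin])
    also have "\<dots> = (\<Prod>q\<in>Q. Z q s ^ c q)"
      by (intro prod.cong refl) (simp add: c_def)
    finally show ?thesis .
  qed
  have all_two: "(\<forall>q\<in>Q. c q = 2) \<longleftrightarrow> (\<forall>i. p (p i) = i)"
  proof
    assume "\<forall>q\<in>Q. c q = 2"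
    then have "p (p i) = i" if "i \<in> moved p" for i
      using c_e[OF that] that by (auto simp: Q_def split: if_splits)
    then show "\<forall>i. p (p i) = i" by (metis mem_Collect_eq moved_def)
  qed (auto simp: Q_def c_e)
  have "finite Q" using fin by (simp add: Q_def)
  moreover have "indep_vars (\<lambda>_. borel) Z Q" using indep_vars_subset[OF indep[folded Z_def] Q_index] .
  moreover have "\<forall>q\<in>Q. c q = 1 \<or> c q = 2" using c_e by (auto simp: Q_def)
  moreover have "\<forall>q\<in>Q. integrable M (Z q)" "\<forall>q\<in>Q. integrable M (\<lambda>s. (Z q s)\<^sup>2)"
    "\<forall>q\<in>Q. expectation (Z q) = 0" "\<forall>q\<in>Q. expectation (\<lambda>s. (Z q s)\<^sup>2) = 1"
    using Q_index int1 int2 mean0 var1 by (auto simp: Z_def)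
  ultimately show "integrable M (\<lambda>s. \<Prod>i\<in>moved p. X (min i (p i)) (max i (p i)) s)"
    and "expectation (\<lambda>s. \<Prod>i\<in>moved p. X (min i (p i)) (max i (p i)) s)
         = (if \<forall>i. p (p i) = i then 1 else 0)"
    using expectation_prod_centered_powers[of Q Z c] by (simp_all add: prod_eq all_two)
qed

lemma (in prob_space) expectation_det_eq_sum_involutions:
  fixes a :: "nat \<Rightarrow> nat \<Rightarrow> real" and X :: "nat \<Rightarrow> nat \<Rightarrow> 'a \<Rightarrow> real" and c :: real
  assumes diag: "\<forall>i<N. a i i = 0"
    and indep: "indep_vars (\<lambda>_. borel) (\<lambda>(i, j). X i j) {(i, j). i \<le> j \<and> j < N}"
    and int1: "\<forall>i j. i \<le> j \<and> j < N \<longrightarrow> integrable M (X i j)"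
    and int2: "\<forall>i j. i \<le> j \<and> j < N \<longrightarrow> integrable M (\<lambda>s. (X i j s)\<^sup>2)"
    and mean0: "\<forall>i j. i \<le> j \<and> j < N \<longrightarrow> expectation (X i j) = 0"
    and var1: "\<forall>i j. i \<le> j \<and> j < N \<longrightarrow> expectation (\<lambda>s. (X i j s)\<^sup>2) = 1"
  shows "expectation (\<lambda>s. Determinant.det (mat N N (\<lambda>(i, j).
            (if i = j then c else 0) + a i j * X (min i j) (max i j) s)))
       = (\<Sum>p\<in>involutions {0..<N}.
            of_int (sign p) * (\<Prod>i\<in>moved p. a i (p i)) * c ^ (N - card (moved p)))"
proof -
  let ?P = "{p. p permutes {0..<N}}"
  let ?w = "\<lambda>p. of_int (sign p) * (\<Prod>i\<in>moved p. a i (p i)) * c ^ (N - card (moved p))"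
  let ?Y = "\<lambda>p s. \<Prod>i\<in>moved p. X (min i (p i)) (max i (p i)) s"
  note moments = expectation_prod_moved_entries[OF indep int1 int2 mean0 var1]
  have det_eq: "Determinant.det (mat N N (\<lambda>(i, j).
            (if i = j then c else 0) + a i j * X (min i j) (max i j) s)) = (\<Sum>p\<in>?P. ?w p * ?Y p s)" for s
  proof -
    have "Determinant.det (mat N N (\<lambda>(i, j). (if i = j then c else 0) + a i j * X (min i j) (max i j) s))
        = (\<Sum>p\<in>?P. of_int (sign p) * c ^ (N - card (moved p))
             * (\<Prod>i\<in>moved p. a i (p i) * X (min i (p i)) (max i (p i)) s))"
      by (rule det_scalar_plus_hollow) (simp add: diag)
    then show ?thesis by (simp add: prod.distrib mult_ac)
  qed
  have "expectation (\<lambda>s. Determinant.det (mat N N (\<lambda>(i, j).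
            (if i = j then c else 0) + a i j * X (min i j) (max i j) s)))
      = expectation (\<lambda>s. \<Sum>p\<in>?P. ?w p * ?Y p s)"
    by (simp only: det_eq)
  also have "\<dots> = (\<Sum>p\<in>?P. ?w p * expectation (?Y p))"
    using moments(1) by (simp add: Bochner_Integration.integral_sum)
  also have "\<dots> = (\<Sum>p\<in>?P. if \<forall>i. p (p i) = i then ?w p else 0)"
    using moments(2) by (intro sum.cong) auto
  also have "\<dots> = sum ?w {p \<in> ?P. \<forall>i. p (p i) = i}"
    by (rule sum.inter_filter[symmetric]) (simp add: finite_permutations)
  also have "{p \<in> ?P. \<forall>i. p (p i) = i} = involutions {0..<N}"
    by (auto simp: involutions_def)
  finally show ?thesis .
qed

lemma sum_sqrt_power_eq_Phi_match:
  fixes t :: real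
  assumes t: "t \<ge> 0"
  shows "(\<Sum>k = 0..N div 2. phi_match k E \<omega> * sqrt t ^ (N - 2 * k))
       = (if even N then Phi_match t N E \<omega> else sqrt t * Phi_match t N E \<omega>)"
proof -
  have "sqrt t ^ (N - 2 * k) = sqrt t ^ (N mod 2) * t ^ (N div 2 - k)" if "k \<le> N div 2" for k
  proof -
    have "N - 2 * k = N mod 2 + 2 * (N div 2 - k)" using that div_mult_mod_eq[of N 2] by linarith
    then show ?thesis using t by (simp add: power_add power_mult)
  qed
  then have "(\<Sum>k = 0..N div 2. phi_match k E \<omega> * sqrt t ^ (N - 2 * k))
      = sqrt t ^ (N mod 2) * Phi_match t N E \<omega>"
    by (simp add: Phi_match_def sum_distrib_left mult_ac)
  then show ?thesis by (simp add: odd_iff_mod_2_eq_one)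
qed

theorem lemma2p1:
  fixes N :: nat and E :: "nat set set" and \<omega> :: "nat set \<Rightarrow> real"
    and a :: "nat \<Rightarrow> nat \<Rightarrow> real"
    and M :: "'s measure" and X :: "nat \<Rightarrow> nat \<Rightarrow> 's \<Rightarrow> real" and t :: real
  assumes graph: "E \<subseteq> {{i, j} | i j. i < N \<and> j < N \<and> i \<noteq> j}"
    and weight_pos: "\<forall>e\<in>E. \<omega> e > 0"
    and skew: "\<forall>i<N. \<forall>j<N. a j i = - a i j"
    and support: "\<forall>i<N. \<forall>j<N. (a i j \<noteq> 0 \<longleftrightarrow> {i, j} \<in> E)"
    and entries: "\<forall>i<N. \<forall>j<N. i < j \<and> {i, j} \<in> E \<longrightarrow> a i j = sqrt (\<omega> {i, j})"
    and prob: "prob_space M"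
    and rv: "\<forall>i j. i \<le> j \<and> j < N \<longrightarrow> X i j \<in> borel_measurable M"
    and indep: "prob_space.indep_vars M (\<lambda>_. borel) (\<lambda>(i, j). X i j) {(i, j). i \<le> j \<and> j < N}"
    and int1: "\<forall>i j. i \<le> j \<and> j < N \<longrightarrow> integrable M (X i j)"
    and int2: "\<forall>i j. i \<le> j \<and> j < N \<longrightarrow> integrable M (\<lambda>s. (X i j s)\<^sup>2)"
    and mean0: "\<forall>i j. i \<le> j \<and> j < N \<longrightarrow> prob_space.expectation M (X i j) = 0"
    and var1: "\<forall>i j. i \<le> j \<and> j < N \<longrightarrow> prob_space.expectation M (\<lambda>s. (X i j s)\<^sup>2) = 1"
    and t: "t \<ge> 0"
  shows "prob_space.expectation M (\<lambda>s. Determinant.det (mat N N (\<lambda>(i, j).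
            (if i = j then sqrt t else 0) + a i j * X (min i j) (max i j) s)))
         = (if even N then Phi_match t N E \<omega> else sqrt t * Phi_match t N E \<omega>)"
proof -
  interpret prob_space M by (rule prob)
  have "expectation (\<lambda>s. Determinant.det (mat N N (\<lambda>(i, j).
            (if i = j then sqrt t else 0) + a i j * X (min i j) (max i j) s)))
      = (\<Sum>p\<in>involutions {0..<N}.
           of_int (sign p) * (\<Prod>i\<in>moved p. a i (p i)) * sqrt t ^ (N - card (moved p)))"
    by (rule expectation_det_eq_sum_involutions[OF _ indep int1 int2 mean0 var1])
      (rule skew_diag_zero[OF skew])
  also have "\<dots> = (\<Sum>k = 0..N div 2. phi_match k E \<omega> * sqrt t ^ (N - 2 * k))"
    by (rule sum_involutions_weight[OF graph weight_pos skew support entries])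
  also have "\<dots> = (if even N then Phi_match t N E \<omega> else sqrt t * Phi_match t N E \<omega>)"
    by (rule sum_sqrt_power_eq_Phi_match[OF t])
  finally show ?thesis .
qed

end
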